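(* Let $n\ge 1$. The subuniverses of $\mathbf{P\L}_n$ are exactly the sets $$P_k=\{0,\tfrac{\ell}{n},\tfrac{2\ell}{n},\dots,\tfrac{(k-1)\ell}{n},1\}=\{\tfrac{i}{k}: 0\le i\le k\},$$ one for each factorization $n=k\cdot\ell$ with $k,\ell$ positive integers. Each such subalgebra is isomorphic to $\mathbf{P\L}_k$. Consequently the lattice of subalgebras of $\mathbf{P\L}_n$ is isomorphic to the lattice of positive divisors of $n$.
   Context: For $n\ge 1$, the $(n+1)$-element positive MV-chain is the algebra $\mathbf{P\L}_n=\langle\{0,\tfrac1n,\dots,\tfrac{n-1}{n},1\},\wedge,\vee,\odot,\oplus,0,1\rangle$. Here $\wedge=\min$, $\vee=\max$, $x\odot y=\max\{0,x+y-1\}$ and $x\oplus y=\min\{1,x+y\}$. It is the negation-free reduct of the finite MV-chain $\text{\L}_n$. *)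

theory Defs
  imports Complex_Main
begin

definition mv_odot :: "real \<Rightarrow> real \<Rightarrow> real" where
  "mv_odot x y = max 0 (x + y - 1)"

definition mv_oplus :: "real \<Rightarrow> real \<Rightarrow> real" where
  "mv_oplus x y = min 1 (x + y)"

definition PL :: "nat \<Rightarrow> real set" where
  "PL n = {real i / real n | i. i \<le> n}"

definition subuniverse :: "nat \<Rightarrow> real set \<Rightarrow> bool" where
  "subuniverse n S \<longleftrightarrow> S \<subseteq> PL n \<and> 0 \<in> S \<and> 1 \<in> S \<and>
     (\<forall>x\<in>S. \<forall>y\<in>S. min x y \<in> S \<and> max x y \<in> S \<and> mv_odot x y \<in> S \<and> mv_oplus x y \<in> S)"

text \<open>An isomorphism between two subalgebras (given by their universes, carrying the
  restricted operations) of the algebra of [0,1] with min, max, odot, oplus, 0, 1.\<close>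

definition pmv_iso :: "real set \<Rightarrow> real set \<Rightarrow> (real \<Rightarrow> real) \<Rightarrow> bool" where
  "pmv_iso A B f \<longleftrightarrow> bij_betw f A B \<and> f 0 = 0 \<and> f 1 = 1 \<and>
     (\<forall>x\<in>A. \<forall>y\<in>A. f (min x y) = min (f x) (f y) \<and> f (max x y) = max (f x) (f y) \<and>
        f (mv_odot x y) = mv_odot (f x) (f y) \<and> f (mv_oplus x y) = mv_oplus (f x) (f y))"

end

theory Submission
  imports Defs
begin

text \<open>A subuniverse S is a finite chain in [0,1] containing 0 and 1. Let b be the largest
  element of S below 1 and d = 1 - b. Then x \<odot> b = x - d for x \<ge> d, so S is closed
  under subtracting d, and x \<oplus> b = 1 for every positive x \<in> S, so no element of S lies
  strictly between 0 and d. Hence S consists of the multiples of d, and since 1 \<in> S we get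
  d = 1/k and S = PL_k. Finally PL_k \<subseteq> PL_k' holds exactly when k divides k', which
  yields both the divisibility condition and the lattice isomorphism with the divisors of n.\<close>

lemma PL_subset_unit_interval: "PL n \<subseteq> {0..1}"
  unfolding PL_def by (auto simp: divide_le_eq_1)

lemma finite_PL: "finite (PL n)"
proof -
  have "PL n = (\<lambda>i. real i / real n) ` {..n}"
    unfolding PL_def by auto
  then show ?thesis by simp
qed

lemma zero_in_PL: "0 \<in> PL n"
  unfolding PL_def by force

lemma one_in_PL: "0 < n \<Longrightarrow> 1 \<in> PL n"
  unfolding PL_def by (rule CollectI, rule exI[of _ n]) simp

lemma PL_0: "PL 0 = {0}"
  unfolding PL_def by auto

lemma PL_eq_scaled:
  assumes "0 < l" "n = k * l"
  shows "{real (i * l) / real n | i. i \<le> k} = PL k"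
  using assms unfolding PL_def by simp

lemma mv_odot_PL:
  assumes "0 < k"
  shows "mv_odot (real i / real k) (real j / real k) = real (i + j - k) / real k"
proof (cases "k \<le> i + j")
  case True
  with assms show ?thesis
    by (simp add: mv_odot_def field_simps)
next
  case False
  with assms have "real i / real k + real j / real k - 1 < 0"
    by (simp add: field_simps)
  with False show ?thesis
    by (simp add: mv_odot_def)
qed

lemma mv_oplus_PL:
  assumes "0 < k"
  shows "mv_oplus (real i / real k) (real j / real k) = real (min k (i + j)) / real k"
  using assms by (auto simp: mv_oplus_def min_def field_simps)

lemma PL_subset_PL_iff:
  assumes "0 < k" "0 < k'"
  shows "PL k \<subseteq> PL k' \<longleftrightarrow> k dvd k'"
proof
  assume "k dvd k'"
  then obtain l where l: "k' = k * l" ..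
  with assms have "0 < l" by simp
  show "PL k \<subseteq> PL k'"
  proof
    fix x assume "x \<in> PL k"
    then obtain i where "i \<le> k" "x = real i / real k"
      unfolding PL_def by auto
    with \<open>0 < l\<close> l have "i * l \<le> k'" "x = real (i * l) / real k'"
      by simp_all
    then show "x \<in> PL k'"
      unfolding PL_def by blast
  qed
next
  assume "PL k \<subseteq> PL k'"
  moreover have "1 / real k \<in> PL k"
    using assms unfolding PL_def by (intro CollectI exI[of _ 1]) simp
  ultimately have "1 / real k \<in> PL k'"
    by blast
  then obtain i where "1 / real k = real i / real k'"
    unfolding PL_def by auto
  with assms have "real k' = real (i * k)"
    by (simp add: field_simps)
  then show "k dvd k'"
    by (metis of_nat_eq_iff dvd_triv_right)
qed

lemma subuniverse_PL:
  assumes "0 < k" "k dvd n" "0 < n"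
  shows "subuniverse n (PL k)"
  unfolding subuniverse_def
proof (intro conjI ballI)
  show "PL k \<subseteq> PL n"
    using assms by (simp add: PL_subset_PL_iff)
  show "0 \<in> PL k" "1 \<in> PL k"
    using assms by (simp_all add: zero_in_PL one_in_PL)
  fix x y assume "x \<in> PL k" "y \<in> PL k"
  then obtain i j where "x = real i / real k" "y = real j / real k"
    unfolding PL_def by auto
  with \<open>x \<in> PL k\<close> \<open>y \<in> PL k\<close> \<open>0 < k\<close>
  show "min x y \<in> PL k" "max x y \<in> PL k" "mv_odot x y \<in> PL k" "mv_oplus x y \<in> PL k"
    by (auto simp: min_def max_def mv_odot_PL mv_oplus_PL PL_def)
qed

lemma mv_odot_closed_diff_multiple_mem:
  assumes "b \<in> S" and closed: "\<And>x. x \<in> S \<Longrightarrow> mv_odot x b \<in> S"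
    and "x \<in> S" "0 \<le> x - real j * (1 - b)" "b \<le> 1"
  shows "x - real j * (1 - b) \<in> S"
  using assms(4)
proof (induction j)
  case 0
  with \<open>x \<in> S\<close> show ?case by simp
next
  case (Suc j)
  with \<open>b \<le> 1\<close> have "0 \<le> x - real j * (1 - b)"
    by (simp add: algebra_simps)
  then have "mv_odot (x - real j * (1 - b)) b \<in> S"
    using Suc.IH closed by blast
  moreover have "mv_odot (x - real j * (1 - b)) b = x - real (Suc j) * (1 - b)"
    using Suc.prems unfolding mv_odot_def by (simp add: algebra_simps)
  ultimately show ?case by simp
qed

lemma multiple_of_gap:
  fixes d x :: real
  assumes "0 < d" "0 \<le> x"
    and gap: "\<And>y. y \<in> S \<Longrightarrow> 0 < y \<Longrightarrow> d \<le> y"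
    and down: "\<And>j. 0 \<le> x - real j * d \<Longrightarrow> x - real j * d \<in> S"
  shows "\<exists>j. x = real j * d"
proof -
  define j where "j = nat \<lfloor>x / d\<rfloor>"
  have "real j = of_int \<lfloor>x / d\<rfloor>"
    unfolding j_def using assms by simp
  then have "real j \<le> x / d" "x / d < real j + 1"
    by linarith+
  with \<open>0 < d\<close> have "0 \<le> x - real j * d" "x - real j * d < d"
    by (simp_all add: field_simps)
  with down gap have "x = real j * d"
    by force
  then show ?thesis ..
qed

lemma mv_closed_chain_eq_PL:
  assumes fin: "finite S" and unit: "S \<subseteq> {0..1}" and "0 \<in> S" "1 \<in> S"
    and closed: "\<And>x y. x \<in> S \<Longrightarrow> y \<in> S \<Longrightarrow> mv_odot x y \<in> S \<and> mv_oplus x y \<in> S"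
  shows "\<exists>k>0. S = PL k"
proof -
  define b where "b = Max (S - {1})"
  have "finite (S - {1})" "S - {1} \<noteq> {}"
    using fin \<open>0 \<in> S\<close> by auto
  then have "b \<in> S - {1}"
    unfolding b_def by (rule Max_in)
  have b_max: "y \<le> b" if "y \<in> S - {1}" for y
    unfolding b_def using \<open>finite (S - {1})\<close> that by (rule Max_ge)
  from \<open>b \<in> S - {1}\<close> unit have "b \<in> S" "b < 1"
    by force+
  define d where "d = 1 - b"
  have "0 < d"
    using \<open>b < 1\<close> by (simp add: d_def)
  have gap: "d \<le> y" if "y \<in> S" "0 < y" for y
  proof -
    have "mv_oplus y b \<in> S" "b < mv_oplus y b"
      using closed that \<open>b \<in> S\<close> \<open>b < 1\<close> by (auto simp: mv_oplus_def)
    with b_max have "mv_oplus y b = 1"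
      by force
    then show ?thesis
      unfolding mv_oplus_def d_def by (simp add: min_def split: if_splits)
  qed
  have down: "x - real j * d \<in> S" if "x \<in> S" "0 \<le> x - real j * d" for x j
    using that \<open>b \<in> S\<close> \<open>b < 1\<close> closed unfolding d_def
    by (intro mv_odot_closed_diff_multiple_mem) auto
  have multiple: "\<exists>j. x = real j * d" if "x \<in> S" for x
    using multiple_of_gap[OF \<open>0 < d\<close> _ gap down[OF that]] that unit by auto
  obtain k where k: "1 = real k * d"
    using multiple \<open>1 \<in> S\<close> by blast
  then have "0 < k" by (cases k) auto
  with k have d: "d = 1 / real k"
    by (simp add: field_simps)
  have "S = PL k"
  proof
    show "S \<subseteq> PL k"
    proof
      fix x assume "x \<in> S"
      with multiple d obtain j where j: "x = real j / real k"
        by auto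
      with \<open>x \<in> S\<close> unit \<open>0 < k\<close> have "j \<le> k"
        by (auto simp: divide_le_eq_1)
      with j show "x \<in> PL k"
        unfolding PL_def by blast
    qed
    show "PL k \<subseteq> S"
    proof
      fix x assume "x \<in> PL k"
      then obtain i where "i \<le> k" "x = real i / real k"
        unfolding PL_def by auto
      with \<open>0 < k\<close> have "x = 1 - real (k - i) * d"
        unfolding d by (simp add: field_simps)
      moreover have "0 \<le> x"
        using \<open>x \<in> PL k\<close> PL_subset_unit_interval[of k] by auto
      ultimately show "x \<in> S"
        using down[OF \<open>1 \<in> S\<close>, of "k - i"] by simp
    qed
  qed
  with \<open>0 < k\<close> show ?thesis by blast
qed

lemma subuniverse_iff_PL:
  "subuniverse n S \<longleftrightarrow> (\<exists>k. 0 < k \<and> k dvd n \<and> S = PL k) \<and> 0 < n"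
proof
  assume sub: "subuniverse n S"
  then have "S \<subseteq> PL n" "1 \<in> S"
    by (simp_all add: subuniverse_def)
  then have "0 < n"
    using PL_0 by (cases n) auto
  moreover have "finite S" "S \<subseteq> {0..1}"
    using \<open>S \<subseteq> PL n\<close> finite_PL PL_subset_unit_interval by (auto intro: finite_subset)
  ultimately obtain k where "0 < k" "S = PL k"
    using sub mv_closed_chain_eq_PL[of S] unfolding subuniverse_def by blast
  with \<open>S \<subseteq> PL n\<close> \<open>0 < n\<close> have "k dvd n"
    by (simp add: PL_subset_PL_iff)
  with \<open>0 < k\<close> \<open>S = PL k\<close> \<open>0 < n\<close> show "(\<exists>k. 0 < k \<and> k dvd n \<and> S = PL k) \<and> 0 < n"
    by blast
qed (auto intro: subuniverse_PL)

lemma subuniverse_iff_factorization: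
  assumes "0 < n"
  shows "subuniverse n S \<longleftrightarrow> (\<exists>k l. 0 < k \<and> 0 < l \<and> n = k * l \<and>
           S = {real (i * l) / real n | i. i \<le> k} \<and> S = {real i / real k | i. i \<le> k})"
proof -
  have "subuniverse n S \<longleftrightarrow> (\<exists>k. 0 < k \<and> k dvd n \<and> S = PL k)"
    using assms by (simp add: subuniverse_iff_PL)
  also have "\<dots> \<longleftrightarrow> (\<exists>k l. 0 < k \<and> 0 < l \<and> n = k * l \<and> S = PL k)"
    using assms by (auto simp: dvd_def)
  also have "\<dots> \<longleftrightarrow> (\<exists>k l. 0 < k \<and> 0 < l \<and> n = k * l \<and>
      S = {real (i * l) / real n | i. i \<le> k} \<and> S = PL k)"
    using PL_eq_scaled[of _ n] by blast
  finally show ?thesis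
    unfolding PL_def .
qed

lemma bij_betw_divisors_subuniverses:
  assumes "0 < n"
  shows "bij_betw PL {k. 0 < k \<and> k dvd n} {S. subuniverse n S}"
  unfolding bij_betw_def
proof
  show "inj_on PL {k. 0 < k \<and> k dvd n}"
  proof (rule inj_onI)
    fix k k' assume "k \<in> {k. 0 < k \<and> k dvd n}" "k' \<in> {k. 0 < k \<and> k dvd n}" "PL k = PL k'"
    then have "k dvd k'" "k' dvd k"
      using PL_subset_PL_iff by auto
    then show "k = k'"
      by (rule dvd_antisym)
  qed
  show "PL ` {k. 0 < k \<and> k dvd n} = {S. subuniverse n S}"
    using assms by (auto simp: subuniverse_iff_PL)
qed

theorem proposition3p2:
  fixes n :: nat
  assumes "n \<ge> 1"
  shows "(\<forall>S. subuniverse n S \<longleftrightarrow>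
            (\<exists>k l. 0 < k \<and> 0 < l \<and> n = k * l \<and>
               S = {real (i * l) / real n | i. i \<le> k} \<and>
               S = {real i / real k | i. i \<le> k}))
       \<and> (\<forall>k l. 0 < k \<and> 0 < l \<and> n = k * l \<longrightarrow>
            (\<exists>f. pmv_iso {real (i * l) / real n | i. i \<le> k} (PL k) f))
       \<and> (\<exists>g. bij_betw g {k. 0 < k \<and> k dvd n} {S. subuniverse n S} \<and>
            (\<forall>k\<in>{k. 0 < k \<and> k dvd n}. \<forall>k'\<in>{k. 0 < k \<and> k dvd n}.
               k dvd k' \<longleftrightarrow> g k \<subseteq> g k'))"
proof (intro conjI allI impI)
  have "0 < n"
    using assms by simp
  then show "subuniverse n S \<longleftrightarrow> (\<exists>k l. 0 < k \<and> 0 < l \<and> n = k * l \<and>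
      S = {real (i * l) / real n | i. i \<le> k} \<and> S = {real i / real k | i. i \<le> k})" for S
    by (rule subuniverse_iff_factorization)
  show "\<exists>f. pmv_iso {real (i * l) / real n | i. i \<le> k} (PL k) f"
    if "0 < k \<and> 0 < l \<and> n = k * l" for k l
    using that PL_eq_scaled[of l n k] by (intro exI[of _ id]) (simp add: pmv_iso_def)
  show "\<exists>g. bij_betw g {k. 0 < k \<and> k dvd n} {S. subuniverse n S} \<and>
      (\<forall>k\<in>{k. 0 < k \<and> k dvd n}. \<forall>k'\<in>{k. 0 < k \<and> k dvd n}. k dvd k' \<longleftrightarrow> g k \<subseteq> g k')"
    using bij_betw_divisors_subuniverses[OF \<open>0 < n\<close>] PL_subset_PL_iff by blast
qed

end
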